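(* Let $\mathcal{A}$ be a strongly connected $d$-dimensional VASS MDP and $(\mathbf{y},\mathbf{z})$ a maximal solution of constraint system (II). There is a constant $k$ depending only on $\mathcal{A}$ (and $\mathbf{y},\mathbf{z}$) such that for every counter $c$ with $\mathbf{y}(c)>0$, every $\varepsilon>0$, every $p\in Q$ and every strategy $\sigma$, there exists $n_0$ such that for all $n\ge n_0$: $\mathbb{P}^\sigma_{p\mathbf{n}}\big(\mathcal{C}[c]\ge n^{1+\varepsilon}\big)\le k\,n^{-\varepsilon}$.
   Context: Let $d\ge 1$. A $d$-dimensional VASS MDP is a tuple $\mathcal{A}=(Q,(Q_n,Q_p),T,P)$, where $Q$ is a finite nonempty set of states partitioned into nondeterministic states $Q_n$ and probabilistic states $Q_p$; $T\subseteq Q\times\mathbb{Z}^d\times Q$ is a finite set of transitions such that for every $p\in Q$ the set $\mathit{Out}(p)$ of transitions of the form $(p,\mathbf{u},q)$ is nonempty; and $P$ assigns to every $t\in\mathit{Out}(p)$ with $p\in Q_p$ a positive rational probability such that $\sum_{t\in\mathit{Out}(p)}P(t)=1$. For $t=(p,\mathbf{u},q)$ write $\mathbf{u}_t=\mathbf{u}$. $\mathcal{A}$ is strongly connected if its underlying graph is strongly connected. A strategy $\sigma$ maps every finite path ending in a state $p\in Q_n$ to a probability distribution over $\mathit{Out}(p)$. A configuration $p\mathbf{v}$ ($p\in Q$, $\mathbf{v}\in\mathbb{Z}^d$) is terminal if some component of $\mathbf{v}$ is negative. A computation from $p\mathbf{v}$ along an infinite path $p_0,\mathbf{u}_1,p_1,\dots$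 is $p_0\mathbf{v}_0,p_1\mathbf{v}_1,\dots$ with $\mathbf{v}_0=\mathbf{v}$, $\mathbf{v}_{i+1}=\mathbf{v}_i+\mathbf{u}_{i+1}$; $\mathit{Term}(\pi)$ is the least $j$ with $p_j\mathbf{v}_j$ terminal ($\infty$ if none). $\mathbb{P}^\sigma_{p\mathbf{v}}$ is the probability measure on computations from $p\mathbf{v}$ under $\sigma$. $\mathbf{n}$ is the vector with all components $n$. $\mathcal{C}[c](\pi)=\sup\{\mathbf{v}_i(c):0\le i<\mathit{Term}(\pi)\}$. Constraint system (II): find $\mathbf{y}\in\mathbb{Z}^d$, $\mathbf{z}\in\mathbb{Z}^Q$ with $\mathbf{y}\ge\vec 0$, $\mathbf{z}\ge\vec 0$, $\mathbf{z}(q)-\mathbf{z}(p)+\sum_{i=1}^d\mathbf{u}(i)\mathbf{y}(i)\le 0$ for every $(p,\mathbf{u},q)\in T$ with $p\in Q_n$, and $\sum_{t=(p,\mathbf{u},q)\in\mathit{Out}(p)}P(t)\big(\mathbf{z}(q)-\mathbf{z}(p)+\sum_{i=1}^d\mathbf{u}_t(i)\mathbf{y}(i)\big)\le 0$ for every $p\in Q_p$. Its objective inequalities are $\mathbf{y}(c)>0$ for each counter $c$, the strict versions of the inequality for each $(p,\mathbf{u},q)\in T$ with $p\in Q_n$, and the strict version of the probabilistic inequality for each $p\in Q_p$. A solution is maximal if every objective inequality satisfied strictly by some solution is satisfied strictly by it. *)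

theory Defs
  imports Complex_Main "HOL-Library.Extended_Real"
begin

text \<open>States are the elements of a finite (nonempty) type 'q,
  counters are the elements of a finite (nonempty) type 'd (so d = CARD('d) \<ge> 1).
  Qn is the set of nondeterministic states, its complement the probabilistic states.
  A transition (p,u,q) is a triple; T is the finite transition set, P the probability
  assignment (only relevant on transitions leaving probabilistic states).\<close>

type_synonym ('q,'d) trans = "'q \<times> ('d \<Rightarrow> int) \<times> 'q"

definition upd :: "('q,'d) trans \<Rightarrow> ('d \<Rightarrow> int)" where
  "upd t = fst (snd t)"

definition tgt :: "('q,'d) trans \<Rightarrow> 'q" where
  "tgt t = snd (snd t)"

definition Out :: "('q,'d) trans set \<Rightarrow> 'q \<Rightarrow> ('q,'d) trans set" where
  "Out T p = {t \<in> T. fst t = p}"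

definition vass_mdp ::
  "'q::finite set \<Rightarrow> ('q,'d::finite) trans set \<Rightarrow> (('q,'d) trans \<Rightarrow> real) \<Rightarrow> bool" where
  "vass_mdp Qn T P \<longleftrightarrow> finite T \<and> (\<forall>p. Out T p \<noteq> {}) \<and>
     (\<forall>p. p \<notin> Qn \<longrightarrow> (\<forall>t\<in>Out T p. P t > 0 \<and> P t \<in> \<rat>) \<and> sum P (Out T p) = 1)"

definition strongly_connected :: "('q,'d) trans set \<Rightarrow> bool" where
  "strongly_connected T \<longleftrightarrow> (\<forall>p q. (p, q) \<in> {(fst t, tgt t) | t. t \<in> T}\<^sup>*)"

definition lin :: "('d::finite \<Rightarrow> int) \<Rightarrow> ('d \<Rightarrow> int) \<Rightarrow> int" where
  "lin y u = (\<Sum>i\<in>UNIV. u i * y i)"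

definition edge_val :: "('d::finite \<Rightarrow> int) \<Rightarrow> ('q \<Rightarrow> int) \<Rightarrow> ('q,'d) trans \<Rightarrow> int" where
  "edge_val y z t = z (tgt t) - z (fst t) + lin y (upd t)"

definition prob_val ::
  "('q,'d::finite) trans set \<Rightarrow> (('q,'d) trans \<Rightarrow> real) \<Rightarrow> ('d \<Rightarrow> int) \<Rightarrow> ('q \<Rightarrow> int) \<Rightarrow> 'q \<Rightarrow> real" where
  "prob_val T P y z p = (\<Sum>t\<in>Out T p. P t * real_of_int (edge_val y z t))"

definition sol_II ::
  "'q::finite set \<Rightarrow> ('q,'d::finite) trans set \<Rightarrow> (('q,'d) trans \<Rightarrow> real) \<Rightarrow>
   ('d \<Rightarrow> int) \<Rightarrow> ('q \<Rightarrow> int) \<Rightarrow> bool" where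
  "sol_II Qn T P y z \<longleftrightarrow> (\<forall>c. y c \<ge> 0) \<and> (\<forall>p. z p \<ge> 0) \<and>
     (\<forall>t\<in>T. fst t \<in> Qn \<longrightarrow> edge_val y z t \<le> 0) \<and>
     (\<forall>p. p \<notin> Qn \<longrightarrow> prob_val T P y z p \<le> 0)"

text \<open>Objective inequalities: indexed by counters (Inl c), transitions (Inr (Inl t)) and
  states (Inr (Inr p)); this predicate says the objective is satisfied strictly.\<close>

definition obj_strict ::
  "'q::finite set \<Rightarrow> ('q,'d::finite) trans set \<Rightarrow> (('q,'d) trans \<Rightarrow> real) \<Rightarrow>
   ('d \<Rightarrow> int) \<Rightarrow> ('q \<Rightarrow> int) \<Rightarrow> 'd + ('q,'d) trans + 'q \<Rightarrow> bool" where
  "obj_strict Qn T P y z ob = (case ob of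
      Inl c \<Rightarrow> y c > 0
    | Inr (Inl t) \<Rightarrow> t \<in> T \<and> fst t \<in> Qn \<and> edge_val y z t < 0
    | Inr (Inr p) \<Rightarrow> p \<notin> Qn \<and> prob_val T P y z p < 0)"

definition maximal_sol_II ::
  "'q::finite set \<Rightarrow> ('q,'d::finite) trans set \<Rightarrow> (('q,'d) trans \<Rightarrow> real) \<Rightarrow>
   ('d \<Rightarrow> int) \<Rightarrow> ('q \<Rightarrow> int) \<Rightarrow> bool" where
  "maximal_sol_II Qn T P y z \<longleftrightarrow> sol_II Qn T P y z \<and>
     (\<forall>y' z'. sol_II Qn T P y' z' \<longrightarrow>
        (\<forall>ob. obj_strict Qn T P y' z' ob \<longrightarrow> obj_strict Qn T P y z ob))"

text \<open>Finite paths: an initial state p0 followed by a list of transitions.\<close>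

fun valid_path :: "('q,'d) trans set \<Rightarrow> 'q \<Rightarrow> ('q,'d) trans list \<Rightarrow> bool" where
  "valid_path T p [] = True"
| "valid_path T p (t # ts) = (t \<in> T \<and> fst t = p \<and> valid_path T (tgt t) ts)"

fun last_state :: "'q \<Rightarrow> ('q,'d) trans list \<Rightarrow> 'q" where
  "last_state p [] = p"
| "last_state p (t # ts) = last_state (tgt t) ts"

text \<open>A (randomized, history-dependent) strategy: sigma p0 ts is the distribution over the
  next transition after the finite path (p0, ts), whenever it ends in a nondeterministic state.\<close>

definition is_strategy ::
  "'q set \<Rightarrow> ('q,'d) trans set \<Rightarrow> ('q \<Rightarrow> ('q,'d) trans list \<Rightarrow> ('q,'d) trans \<Rightarrow> real) \<Rightarrow> bool" where
  "is_strategy Qn T \<sigma> \<longleftrightarrow> (\<forall>p0 ts. valid_path T p0 ts \<and> last_state p0 ts \<in> Qn \<longrightarrow>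
      (\<forall>t. \<sigma> p0 ts t \<ge> 0) \<and> (\<forall>t. t \<notin> Out T (last_state p0 ts) \<longrightarrow> \<sigma> p0 ts t = 0) \<and>
      sum (\<sigma> p0 ts) (Out T (last_state p0 ts)) = 1)"

definition step_prob ::
  "'q set \<Rightarrow> ('q,'d) trans set \<Rightarrow> (('q,'d) trans \<Rightarrow> real) \<Rightarrow>
   ('q \<Rightarrow> ('q,'d) trans list \<Rightarrow> ('q,'d) trans \<Rightarrow> real) \<Rightarrow>
   'q \<Rightarrow> ('q,'d) trans list \<Rightarrow> ('q,'d) trans \<Rightarrow> real" where
  "step_prob Qn T P \<sigma> p0 ts t =
     (if t \<in> Out T (last_state p0 ts)
      then (if last_state p0 ts \<in> Qn then \<sigma> p0 ts t else P t) else 0)"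

text \<open>Probability (under sigma, from p0) of the cylinder of the finite path (p0, ts).\<close>

definition path_weight ::
  "'q set \<Rightarrow> ('q,'d) trans set \<Rightarrow> (('q,'d) trans \<Rightarrow> real) \<Rightarrow>
   ('q \<Rightarrow> ('q,'d) trans list \<Rightarrow> ('q,'d) trans \<Rightarrow> real) \<Rightarrow>
   'q \<Rightarrow> ('q,'d) trans list \<Rightarrow> real" where
  "path_weight Qn T P \<sigma> p0 ts = (\<Prod>i<length ts. step_prob Qn T P \<sigma> p0 (take i ts) (ts ! i))"

definition cval :: "('d \<Rightarrow> int) \<Rightarrow> ('q,'d) trans list \<Rightarrow> nat \<Rightarrow> ('d \<Rightarrow> int)" where
  "cval v ts i = (\<lambda>c. v c + (\<Sum>j<i. upd (ts ! j) c))"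

definition terminal :: "('d \<Rightarrow> int) \<Rightarrow> bool" where
  "terminal w \<longleftrightarrow> (\<exists>c. w c < 0)"

text \<open>C[c] restricted to the first length(ts) steps: sup of v_i(c) over i \<le> length ts, i < Term.\<close>

definition C_upto :: "('d \<Rightarrow> int) \<Rightarrow> ('q,'d) trans list \<Rightarrow> 'd \<Rightarrow> ereal" where
  "C_upto v ts c = Sup {ereal (real_of_int (cval v ts i c)) | i.
      i \<le> length ts \<and> (\<forall>j\<le>i. \<not> terminal (cval v ts j))}"

text \<open>P^sigma_{p v}(C[c] \<ge> x). The event is the increasing union over m of the events
  determined by the first m steps (C[c] is a sup of integers, so C[c] \<ge> x iff some
  prefix already witnesses it); by continuity of the path measure its probability is the
  supremum over m of the probabilities of these cylinder events.\<close>

definition Prob_C_ge ::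
  "'q set \<Rightarrow> ('q,'d) trans set \<Rightarrow> (('q,'d) trans \<Rightarrow> real) \<Rightarrow>
   ('q \<Rightarrow> ('q,'d) trans list \<Rightarrow> ('q,'d) trans \<Rightarrow> real) \<Rightarrow>
   'q \<Rightarrow> ('d \<Rightarrow> int) \<Rightarrow> 'd \<Rightarrow> real \<Rightarrow> real" where
  "Prob_C_ge Qn T P \<sigma> p v c x = (SUP m::nat.
     (\<Sum>ts\<in>{ts. length ts = m \<and> set ts \<subseteq> T}.
        path_weight Qn T P \<sigma> p ts * (if C_upto v ts c \<ge> ereal x then 1 else 0)))"

end

theory Submission
  imports Defs
begin

(* Under every strategy, (II) makes the potential z(state) + y . (counter vector) a
   supermartingale along the computation. Freeze it at the value x as soon as counter c
   reaches x (the potential then is at least x, because y(c) is a positive integer), and at 0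
   once a terminal configuration is reached; shifting the live part by a bound K on the
   one-step change keeps it a nonnegative supermartingale. Its expectation after any number
   of steps therefore gives x * P(C[c] >= x) <= z(p) + n * sum y + K from p n, and
   x = n^(1+eps) yields the claim with k = sum z + sum y + K. *)

lemma last_state_append: "last_state p (ts @ us) = last_state (last_state p ts) us"
  by (induction ts arbitrary: p) auto

lemma valid_path_append:
  "valid_path T p (ts @ us) \<longleftrightarrow> valid_path T p ts \<and> valid_path T (last_state p ts) us"
  by (induction ts arbitrary: p) auto

lemma cval_append: "i \<le> length ts \<Longrightarrow> cval v (ts @ us) i = cval v ts i"
  unfolding cval_def by (auto simp: nth_append intro!: sum.cong)

lemma cval_snoc: "cval v (ts @ [t]) (Suc (length ts)) = (\<lambda>c. cval v ts (length ts) c + upd t c)"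
  unfolding cval_def by (simp add: nth_append add.assoc)

lemma lin_add: "lin y (\<lambda>c. a c + b c) = lin y a + lin y b"
  unfolding lin_def by (simp add: algebra_simps sum.distrib)

lemma lin_nonneg: "(\<And>c. 0 \<le> y c) \<Longrightarrow> (\<And>c. 0 \<le> w c) \<Longrightarrow> 0 \<le> lin y w"
  unfolding lin_def by (simp add: sum_nonneg)

lemma lin_ge_component: "(\<And>c. 0 \<le> y c) \<Longrightarrow> (\<And>c. 0 \<le> w c) \<Longrightarrow> w c * y c \<le> lin y w"
  unfolding lin_def by (rule member_le_sum) auto

lemma path_weight_snoc:
  "path_weight Qn T P \<sigma> p (ts @ [t]) = path_weight Qn T P \<sigma> p ts * step_prob Qn T P \<sigma> p ts t"
proof -
  have "(\<Prod>i<length ts. step_prob Qn T P \<sigma> p (take i (ts @ [t])) ((ts @ [t]) ! i)) =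
        (\<Prod>i<length ts. step_prob Qn T P \<sigma> p (take i ts) (ts ! i))"
    by (rule prod.cong) (auto simp: nth_append)
  then show ?thesis unfolding path_weight_def by simp
qed

lemma lists_length_Suc_snoc:
  "{ts. length ts = Suc m \<and> set ts \<subseteq> A} =
   (\<lambda>(ts, t). ts @ [t]) ` ({ts. length ts = m \<and> set ts \<subseteq> A} \<times> A)"
proof (intro set_eqI iffI)
  fix us assume "us \<in> {ts. length ts = Suc m \<and> set ts \<subseteq> A}"
  moreover from this obtain ts t where "us = ts @ [t]"
    by (metis (mono_tags) length_Suc_conv_rev mem_Collect_eq)
  ultimately show "us \<in> (\<lambda>(ts, t). ts @ [t]) ` ({ts. length ts = m \<and> set ts \<subseteq> A} \<times> A)"
    by (auto simp: image_iff)
qed auto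

lemma ereal_le_Sup_finite_iff:
  fixes S :: "ereal set"
  assumes "finite S"
  shows "ereal a \<le> Sup S \<longleftrightarrow> (\<exists>s\<in>S. ereal a \<le> s)"
proof (cases "S = {}")
  case False
  with assms show ?thesis by (simp add: cSup_eq_Max Max_ge_iff)
qed (simp add: bot_ereal_def)

definition alive :: "('d \<Rightarrow> int) \<Rightarrow> ('q,'d) trans list \<Rightarrow> bool" where
  "alive v ts \<longleftrightarrow> (\<forall>j\<le>length ts. \<not> terminal (cval v ts j))"

lemma alive_snocD: "alive v (ts @ [t]) \<Longrightarrow> alive v ts"
  unfolding alive_def by (metis cval_append le_SucI length_append_singleton)

lemma alive_cval_nonneg: "alive v ts \<Longrightarrow> i \<le> length ts \<Longrightarrow> 0 \<le> cval v ts i c"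
  unfolding alive_def terminal_def by (meson not_le)

lemma alive_Nil: "(\<And>c. 0 \<le> v c) \<Longrightarrow> alive v []"
  unfolding alive_def terminal_def cval_def by (simp add: not_less)

lemma ereal_le_C_upto_iff:
  "ereal x \<le> C_upto v ts c \<longleftrightarrow>
   (\<exists>i\<le>length ts. (\<forall>j\<le>i. \<not> terminal (cval v ts j)) \<and> x \<le> real_of_int (cval v ts i c))"
proof -
  have "{ereal (real_of_int (cval v ts i c)) | i. i \<le> length ts \<and> (\<forall>j\<le>i. \<not> terminal (cval v ts j))} =
        (\<lambda>i. ereal (real_of_int (cval v ts i c))) ` {i. i \<le> length ts \<and> (\<forall>j\<le>i. \<not> terminal (cval v ts j))}"
    by auto
  then show ?thesis
    unfolding C_upto_def by (simp add: ereal_le_Sup_finite_iff)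
qed

lemma C_upto_snoc_mono: "C_upto v ts c \<le> C_upto v (ts @ [t]) c"
  unfolding C_upto_def
proof (rule Sup_subset_mono, safe)
  fix i assume "i \<le> length ts" "\<forall>j\<le>i. \<not> terminal (cval v ts j)"
  then show "\<exists>i'. ereal (real_of_int (cval v ts i c)) = ereal (real_of_int (cval v (ts @ [t]) i' c)) \<and>
      i' \<le> length (ts @ [t]) \<and> (\<forall>j\<le>i'. \<not> terminal (cval v (ts @ [t]) j))"
    by (intro exI[of _ i]) (auto simp: cval_append)
qed

lemma ereal_le_C_upto_snocD:
  assumes "ereal x \<le> C_upto v (ts @ [t]) c" and "\<not> ereal x \<le> C_upto v ts c"
  shows "alive v (ts @ [t]) \<and> x \<le> real_of_int (cval v (ts @ [t]) (Suc (length ts)) c)"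
proof -
  obtain i where i: "i \<le> Suc (length ts)" "\<forall>j\<le>i. \<not> terminal (cval v (ts @ [t]) j)"
    "x \<le> real_of_int (cval v (ts @ [t]) i c)"
    using assms(1) unfolding ereal_le_C_upto_iff by auto
  have "\<not> i \<le> length ts"
    using assms(2) i unfolding ereal_le_C_upto_iff by (metis cval_append le_trans)
  with i show ?thesis unfolding alive_def by (simp add: le_Suc_eq)
qed

definition potential ::
  "('d::finite \<Rightarrow> int) \<Rightarrow> ('q \<Rightarrow> int) \<Rightarrow> 'q \<Rightarrow> ('d \<Rightarrow> int) \<Rightarrow> ('q,'d) trans list \<Rightarrow> real" where
  "potential y z p v ts = real_of_int (z (last_state p ts) + lin y (cval v ts (length ts)))"

lemma potential_Nil: "potential y z p v [] = real_of_int (z p + lin y v)"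
  unfolding potential_def cval_def by simp

lemma potential_snoc:
  assumes "fst t = last_state p ts"
  shows "potential y z p v (ts @ [t]) = potential y z p v ts + real_of_int (edge_val y z t)"
proof -
  have "lin y (cval v (ts @ [t]) (length (ts @ [t]))) = lin y (cval v ts (length ts)) + lin y (upd t)"
    using cval_snoc[of v ts t] lin_add[of y "cval v ts (length ts)" "upd t"] by simp
  with assms show ?thesis
    unfolding potential_def edge_val_def by (simp add: last_state_append)
qed

lemma potential_nonneg:
  assumes "\<And>c. 0 \<le> y c" and "\<And>q. 0 \<le> z q" and "alive v ts"
  shows "0 \<le> potential y z p v ts"
proof -
  have "0 \<le> lin y (cval v ts (length ts))"
    by (intro lin_nonneg) (use assms(1) alive_cval_nonneg[OF assms(3)] in auto)
  with assms(2)[of "last_state p ts"] show ?thesis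
    by (simp add: potential_def)
qed

lemma counter_le_potential:
  assumes "\<And>c. 0 \<le> y c" and "\<And>q. 0 \<le> z q" and "alive v ts" and "0 < y c"
  shows "real_of_int (cval v ts (length ts) c) \<le> potential y z p v ts"
proof -
  let ?w = "cval v ts (length ts)"
  have w_nonneg: "0 \<le> ?w c'" for c'
    using alive_cval_nonneg[OF assms(3)] by simp
  have "?w c \<le> ?w c * y c"
    using w_nonneg[of c] \<open>0 < y c\<close> by (simp add: mult_le_cancel_left1)
  also have "\<dots> \<le> lin y ?w"
    using lin_ge_component[OF assms(1) w_nonneg] .
  also have "\<dots> \<le> z (last_state p ts) + lin y ?w"
    using assms(2) by simp
  finally show ?thesis unfolding potential_def by linarith
qed

definition stopped_potential ::
  "('d::finite \<Rightarrow> int) \<Rightarrow> ('q \<Rightarrow> int) \<Rightarrow> real \<Rightarrow> 'q \<Rightarrow> ('d \<Rightarrow> int) \<Rightarrow> 'd \<Rightarrow> real \<Rightarrow>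
   ('q,'d) trans list \<Rightarrow> real" where
  "stopped_potential y z K p v c x ts =
     (if ereal x \<le> C_upto v ts c then x
      else if alive v ts then potential y z p v ts + K else 0)"

lemma stopped_potential_nonneg:
  assumes "\<And>c. 0 \<le> y c" and "\<And>q. 0 \<le> z q" and "0 \<le> x" and "0 \<le> K"
  shows "0 \<le> stopped_potential y z K p v c x ts"
  using assms potential_nonneg[where y = y and z = z and p = p and v = v and ts = ts]
  by (simp add: stopped_potential_def)

lemma stopped_potential_le_initial:
  fixes y :: "'d::finite \<Rightarrow> int" and p :: 'q
  assumes "\<And>c. 0 \<le> y c" and "\<And>q. 0 \<le> z q" and "0 < y c" and "0 \<le> K" and "\<And>c. 0 \<le> v c"
  shows "stopped_potential y z K p v c x [] \<le> real_of_int (z p + lin y v) + K"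
proof -
  let ?nil = "[] :: ('q,'d) trans list"
  have alive: "alive v ?nil"
    using assms(5) by (rule alive_Nil)
  from counter_le_potential[where y = y and z = z and v = v and ts = ?nil and c = c and p = p]
  have "x \<le> real_of_int (z p + lin y v)" if "ereal x \<le> C_upto v ?nil c"
    using that assms alive by (simp add: ereal_le_C_upto_iff potential_Nil cval_def)
  with alive assms(4) show ?thesis
    by (auto simp: stopped_potential_def potential_Nil)
qed

lemma stopped_potential_snoc_le:
  assumes "\<And>c. 0 \<le> y c" and "\<And>q. 0 \<le> z q" and "0 < y c"
    and "\<bar>real_of_int (edge_val y z t)\<bar> \<le> K" and "fst t = last_state p ts"
    and "\<not> ereal x \<le> C_upto v ts c" and "alive v ts"
  shows "stopped_potential y z K p v c x (ts @ [t])
    \<le> potential y z p v ts + K + real_of_int (edge_val y z t)"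
proof (cases "ereal x \<le> C_upto v (ts @ [t]) c")
  case True
  from ereal_le_C_upto_snocD[OF True assms(6)]
  have "alive v (ts @ [t])" and "x \<le> real_of_int (cval v (ts @ [t]) (Suc (length ts)) c)"
    by auto
  then have "x \<le> potential y z p v (ts @ [t])"
    using assms(1-3) counter_le_potential[where y = y and z = z and p = p and v = v and ts = "ts @ [t]"]
    by fastforce
  with True assms(4) show ?thesis
    by (simp add: stopped_potential_def potential_snoc[OF assms(5)])
next
  case False
  have "0 \<le> potential y z p v ts"
    using assms(1,2,7) by (rule potential_nonneg)
  with False assms(4) show ?thesis
    by (auto simp: stopped_potential_def potential_snoc[OF assms(5)])
qed

lemma initial_potential_le_linear:
  fixes z :: "'q::finite \<Rightarrow> int" and y :: "'d::finite \<Rightarrow> int"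
  assumes "\<And>q. 0 \<le> z q" and "0 \<le> K" and "1 \<le> n"
  shows "real_of_int (z p + lin y (\<lambda>_. int n)) + K
    \<le> real n * ((\<Sum>q\<in>UNIV. real_of_int (z q)) + (\<Sum>c\<in>UNIV. real_of_int (y c)) + K)"
proof -
  have "real_of_int (z p) \<le> (\<Sum>q\<in>UNIV. real_of_int (z q))"
    using assms(1) by (intro member_le_sum) auto
  also have "\<dots> \<le> real n * (\<Sum>q\<in>UNIV. real_of_int (z q))"
    using assms(1,3) sum_nonneg[of UNIV "\<lambda>q. real_of_int (z q)"]
    by (simp add: mult_le_cancel_right1)
  finally have "real_of_int (z p) \<le> real n * (\<Sum>q\<in>UNIV. real_of_int (z q))" .
  moreover have "real_of_int (lin y (\<lambda>_. int n)) = real n * (\<Sum>c\<in>UNIV. real_of_int (y c))"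
    by (simp add: lin_def sum_distrib_left)
  moreover have "K \<le> real n * K"
    using assms(2,3) by (simp add: mult_le_cancel_right1)
  ultimately show ?thesis by (simp add: algebra_simps)
qed

locale mdp_strategy =
  fixes Qn :: "'q::finite set" and T :: "('q,'d::finite) trans set"
    and P :: "('q,'d) trans \<Rightarrow> real"
    and \<sigma> :: "'q \<Rightarrow> ('q,'d) trans list \<Rightarrow> ('q,'d) trans \<Rightarrow> real"
  assumes mdp: "vass_mdp Qn T P" and strategy: "is_strategy Qn T \<sigma>"
begin

abbreviation "sp \<equiv> step_prob Qn T P \<sigma>"
abbreviation "pw \<equiv> path_weight Qn T P \<sigma>"

lemma finite_trans: "finite T"
  using mdp by (simp add: vass_mdp_def)

lemma trans_nonempty: "T \<noteq> {}"
  using mdp by (auto simp: vass_mdp_def Out_def)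

lemma step_prob_nonneg:
  assumes "valid_path T p ts"
  shows "0 \<le> sp p ts t"
proof -
  have "0 \<le> \<sigma> p ts t" if "last_state p ts \<in> Qn"
    using that assms strategy unfolding is_strategy_def by blast
  moreover have "0 < P t" if "last_state p ts \<notin> Qn" "t \<in> Out T (last_state p ts)"
    using that mdp unfolding vass_mdp_def by blast
  ultimately show ?thesis by (auto simp: step_prob_def)
qed

lemma sum_step_prob_Out: "(\<Sum>t\<in>T. sp p ts t * f t) = (\<Sum>t\<in>Out T (last_state p ts). sp p ts t * f t)"
  by (rule sum.mono_neutral_right) (auto simp: finite_trans Out_def step_prob_def)

lemma sum_step_prob:
  assumes "valid_path T p ts"
  shows "(\<Sum>t\<in>T. sp p ts t) = 1"
proof -
  have "(\<Sum>t\<in>T. sp p ts t) = (\<Sum>t\<in>Out T (last_state p ts). sp p ts t)"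
    using sum_step_prob_Out[of p ts "\<lambda>_. 1"] by simp
  also have "\<dots> = 1"
  proof (cases "last_state p ts \<in> Qn")
    case True
    with assms strategy show ?thesis by (simp add: is_strategy_def step_prob_def)
  next
    case False
    with mdp show ?thesis by (simp add: vass_mdp_def step_prob_def)
  qed
  finally show ?thesis .
qed

lemma expected_edge_val_nonpos:
  assumes "sol_II Qn T P y z" and "valid_path T p ts"
  shows "(\<Sum>t\<in>T. sp p ts t * real_of_int (edge_val y z t)) \<le> 0"
proof (cases "last_state p ts \<in> Qn")
  case True
  have "sp p ts t * real_of_int (edge_val y z t) \<le> 0" if "t \<in> Out T (last_state p ts)" for t
    using that True assms step_prob_nonneg[OF assms(2), of t]
    by (intro mult_nonneg_nonpos) (auto simp: sol_II_def Out_def)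
  then show ?thesis
    unfolding sum_step_prob_Out by (rule sum_nonpos)
next
  case False
  have "(\<Sum>t\<in>T. sp p ts t * real_of_int (edge_val y z t)) =
      (\<Sum>t\<in>Out T (last_state p ts). sp p ts t * real_of_int (edge_val y z t))"
    by (rule sum_step_prob_Out)
  also have "\<dots> = prob_val T P y z (last_state p ts)"
    using False by (auto simp: prob_val_def step_prob_def intro!: sum.cong)
  finally show ?thesis using False assms(1) by (simp add: sol_II_def)
qed

lemma path_weight_nonzero_imp_valid: "pw p ts \<noteq> 0 \<Longrightarrow> valid_path T p ts"
proof (induction ts rule: rev_induct)
  case (snoc t ts)
  then have "valid_path T p ts" and "t \<in> Out T (last_state p ts)"
    by (auto simp: path_weight_snoc step_prob_def split: if_splits)
  then show ?case by (simp add: valid_path_append Out_def)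
qed simp

lemma path_weight_nonneg: "0 \<le> pw p ts"
proof (induction ts rule: rev_induct)
  case Nil
  then show ?case by (simp add: path_weight_def)
next
  case (snoc t ts)
  show ?case
  proof (cases "pw p ts = 0")
    case False
    with snoc step_prob_nonneg[OF path_weight_nonzero_imp_valid] show ?thesis
      by (simp add: path_weight_snoc)
  qed (simp add: path_weight_snoc)
qed

lemma supermartingale_expectation_le:
  assumes "\<And>ts. valid_path T p ts \<Longrightarrow> (\<Sum>t\<in>T. sp p ts t * F (ts @ [t])) \<le> F ts"
  shows "(\<Sum>ts | length ts = m \<and> set ts \<subseteq> T. pw p ts * F ts) \<le> F []"
proof (induction m)
  case 0
  have "{ts. length ts = 0 \<and> set ts \<subseteq> T} = {[]}" by auto
  then show ?case by (simp add: path_weight_def)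
next
  case (Suc m)
  let ?L = "{ts. length ts = m \<and> set ts \<subseteq> T}"
  have "inj_on (\<lambda>(ts, t). ts @ [t]) (?L \<times> T)"
    by (auto simp: inj_on_def)
  then have "(\<Sum>ts | length ts = Suc m \<and> set ts \<subseteq> T. pw p ts * F ts) =
      (\<Sum>(ts, t)\<in>?L \<times> T. pw p (ts @ [t]) * F (ts @ [t]))"
    unfolding lists_length_Suc_snoc by (simp add: sum.reindex case_prod_unfold)
  also have "\<dots> = (\<Sum>ts\<in>?L. pw p ts * (\<Sum>t\<in>T. sp p ts t * F (ts @ [t])))"
    by (simp add: sum.cartesian_product[symmetric] path_weight_snoc sum_distrib_left mult.assoc)
  also have "\<dots> \<le> (\<Sum>ts\<in>?L. pw p ts * F ts)"
  proof (rule sum_mono)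
    fix ts
    show "pw p ts * (\<Sum>t\<in>T. sp p ts t * F (ts @ [t])) \<le> pw p ts * F ts"
      using assms[OF path_weight_nonzero_imp_valid] path_weight_nonneg[of p ts]
      by (cases "pw p ts = 0") (auto intro: mult_left_mono)
  qed
  also have "\<dots> \<le> F []" by (rule Suc.IH)
  finally show ?case .
qed

lemma edge_bound_nonneg:
  assumes "\<And>t. t \<in> T \<Longrightarrow> \<bar>real_of_int (edge_val y z t)\<bar> \<le> K"
  shows "0 \<le> K"
  using trans_nonempty assms by (meson abs_ge_zero equals0I order_trans)

lemma stopped_potential_supermartingale:
  assumes sol: "sol_II Qn T P y z" and "0 < y c" and "0 \<le> x"
    and K: "\<And>t. t \<in> T \<Longrightarrow> \<bar>real_of_int (edge_val y z t)\<bar> \<le> K"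
    and valid: "valid_path T p ts"
  shows "(\<Sum>t\<in>T. sp p ts t * stopped_potential y z K p v c x (ts @ [t]))
    \<le> stopped_potential y z K p v c x ts"
proof -
  let ?F = "stopped_potential y z K p v c x"
  have y: "\<And>c. 0 \<le> y c" and z: "\<And>q. 0 \<le> z q" using sol by (auto simp: sol_II_def)
  consider (hit) "ereal x \<le> C_upto v ts c"
    | (dead) "\<not> ereal x \<le> C_upto v ts c" "\<not> alive v ts"
    | (alive) "\<not> ereal x \<le> C_upto v ts c" "alive v ts"
    by blast
  then show ?thesis
  proof cases
    case hit
    then have "ereal x \<le> C_upto v (ts @ [t]) c" for t
      using C_upto_snoc_mono by (rule order_trans)
    then have "?F (ts @ [t]) = x" for t
      by (simp add: stopped_potential_def)
    with hit show ?thesis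
      by (simp add: stopped_potential_def sum_distrib_right[symmetric] sum_step_prob[OF valid])
  next
    case dead
    then have "\<not> alive v (ts @ [t])" for t
      using alive_snocD by blast
    moreover have "\<not> ereal x \<le> C_upto v (ts @ [t]) c" for t
      using dead(1) ereal_le_C_upto_snocD[of x v ts t c] \<open>\<not> alive v (ts @ [t])\<close> by blast
    ultimately have "?F (ts @ [t]) = 0" for t
      by (simp add: stopped_potential_def)
    with dead show ?thesis by (simp add: stopped_potential_def)
  next
    case alive
    let ?g = "potential y z p v ts"
    have "?F (ts @ [t]) \<le> ?g + K + real_of_int (edge_val y z t)"
      if "t \<in> Out T (last_state p ts)" for t
      using that y z \<open>0 < y c\<close> K alive
        stopped_potential_snoc_le[where y = y and z = z and c = c and t = t and K = K and p = p
          and ts = ts and x = x and v = v]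
      by (simp add: Out_def)
    then have "sp p ts t * ?F (ts @ [t]) \<le> sp p ts t * (?g + K + real_of_int (edge_val y z t))"
      if "t \<in> T" for t
      using step_prob_nonneg[OF valid, of t]
      by (cases "t \<in> Out T (last_state p ts)") (simp_all add: mult_left_mono step_prob_def)
    then have "(\<Sum>t\<in>T. sp p ts t * ?F (ts @ [t]))
        \<le> (\<Sum>t\<in>T. sp p ts t * (?g + K + real_of_int (edge_val y z t)))"
      by (rule sum_mono)
    also have "\<dots> = (\<Sum>t\<in>T. sp p ts t) * (?g + K)
        + (\<Sum>t\<in>T. sp p ts t * real_of_int (edge_val y z t))"
      by (simp add: algebra_simps sum.distrib sum_distrib_left)
    also have "\<dots> \<le> ?g + K"
      using sum_step_prob[OF valid] expected_edge_val_nonpos[OF sol valid] by simp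
    finally show ?thesis
      using alive by (simp add: stopped_potential_def)
  qed
qed

lemma Prob_C_ge_le:
  assumes sol: "sol_II Qn T P y z" and "0 < y c" and "0 < x" and "\<And>c. 0 \<le> v c"
    and K: "\<And>t. t \<in> T \<Longrightarrow> \<bar>real_of_int (edge_val y z t)\<bar> \<le> K"
  shows "Prob_C_ge Qn T P \<sigma> p v c x \<le> (real_of_int (z p + lin y v) + K) / x"
proof -
  let ?F = "stopped_potential y z K p v c x"
  have y: "\<And>c. 0 \<le> y c" and z: "\<And>q. 0 \<le> z q" using sol by (auto simp: sol_II_def)
  have "0 \<le> K" using edge_bound_nonneg[OF K] .
  have "(\<Sum>ts | length ts = m \<and> set ts \<subseteq> T. pw p ts * (if C_upto v ts c \<ge> ereal x then 1 else 0))
      \<le> (real_of_int (z p + lin y v) + K) / x" for m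
  proof -
    have "x * (if C_upto v ts c \<ge> ereal x then 1 else 0) \<le> ?F ts" for ts
    proof -
      have "0 \<le> ?F ts"
        by (rule stopped_potential_nonneg) (use y z \<open>0 < x\<close> \<open>0 \<le> K\<close> in auto)
      then show ?thesis
        by (cases "C_upto v ts c \<ge> ereal x") (simp_all add: stopped_potential_def)
    qed
    then have "x * (\<Sum>ts | length ts = m \<and> set ts \<subseteq> T. pw p ts * (if C_upto v ts c \<ge> ereal x then 1 else 0))
        \<le> (\<Sum>ts | length ts = m \<and> set ts \<subseteq> T. pw p ts * ?F ts)"
      unfolding sum_distrib_left
      by (intro sum_mono) (metis mult.left_commute mult_left_mono path_weight_nonneg)
    also have "\<dots> \<le> ?F []"
      using stopped_potential_supermartingale[OF sol \<open>0 < y c\<close> _ K] \<open>0 < x\<close>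
      by (intro supermartingale_expectation_le) simp
    also have "\<dots> \<le> real_of_int (z p + lin y v) + K"
      by (rule stopped_potential_le_initial) (use y z assms(2,4) \<open>0 \<le> K\<close> in auto)
    finally show ?thesis
      using \<open>0 < x\<close> by (simp add: field_simps)
  qed
  then show ?thesis
    unfolding Prob_C_ge_def by (intro cSUP_least) auto
qed

end

theorem lemma4p4:
  fixes Qn :: "'q::finite set"
    and T :: "('q, 'd::finite) trans set"
    and P :: "('q, 'd) trans \<Rightarrow> real"
    and y :: "'d \<Rightarrow> int" and z :: "'q \<Rightarrow> int"
  assumes "vass_mdp Qn T P"
    and "strongly_connected T"
    and "maximal_sol_II Qn T P y z"
  shows "\<exists>k::real. \<forall>c (\<epsilon>::real) p \<sigma>.
           y c > 0 \<longrightarrow> \<epsilon> > 0 \<longrightarrow> is_strategy Qn T \<sigma> \<longrightarrow>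
           (\<exists>n0::nat. \<forall>n\<ge>n0.
              Prob_C_ge Qn T P \<sigma> p (\<lambda>_. int n) c (real n powr (1 + \<epsilon>))
                \<le> k * real n powr (- \<epsilon>))"
proof -
  have sol: "sol_II Qn T P y z"
    using assms(3) by (simp add: maximal_sol_II_def)
  define K where "K = (\<Sum>t\<in>T. \<bar>real_of_int (edge_val y z t)\<bar>)"
  define k where "k = (\<Sum>q\<in>UNIV. real_of_int (z q)) + (\<Sum>c\<in>UNIV. real_of_int (y c)) + K"
  have K: "\<bar>real_of_int (edge_val y z t)\<bar> \<le> K" if "t \<in> T" for t
    using that assms(1) unfolding K_def vass_mdp_def by (intro member_le_sum) auto
  show ?thesis
  proof (intro exI[of _ k] allI impI)
    fix c and \<epsilon> :: real and p \<sigma>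
    assume "0 < y c" and "0 < \<epsilon>" and "is_strategy Qn T \<sigma>"
    with assms(1) interpret mdp_strategy Qn T P \<sigma> by unfold_locales
    have "Prob_C_ge Qn T P \<sigma> p (\<lambda>_. int n) c (real n powr (1 + \<epsilon>)) \<le> k * real n powr (- \<epsilon>)"
      if "1 \<le> n" for n
    proof -
      have "Prob_C_ge Qn T P \<sigma> p (\<lambda>_. int n) c (real n powr (1 + \<epsilon>))
          \<le> (real_of_int (z p + lin y (\<lambda>_. int n)) + K) / real n powr (1 + \<epsilon>)"
        using that by (intro Prob_C_ge_le[OF sol \<open>0 < y c\<close> _ _ K]) auto
      also have "\<dots> \<le> real n * k / real n powr (1 + \<epsilon>)"
        unfolding k_def using sol that
        by (intro divide_right_mono initial_potential_le_linear) (auto simp: sol_II_def K_def)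
      also have "\<dots> = k * real n powr (- \<epsilon>)"
        using that by (simp add: powr_add powr_minus field_simps)
      finally show ?thesis .
    qed
    then show "\<exists>n0. \<forall>n\<ge>n0. Prob_C_ge Qn T P \<sigma> p (\<lambda>_. int n) c (real n powr (1 + \<epsilon>))
        \<le> k * real n powr (- \<epsilon>)"
      by blast
  qed
qed

end
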